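(* Every finite graph $G$ admits a strong $\mathbb{Q}$-emm.
   Context: Graphs may have loops and multiple edges. For a finite graph $G$ with oriented edges $e_i$, $H_1(G,\mathbb{Z})$ is its cycle group, $H^1(G,\mathbb{Z})$ its dual (cokernel of the coboundary $C^0\to\bigoplus\mathbb{Z}e_i^*$), and the image of $e_i^*$ in $H^1$ is the coedge $e_i^*$. A $\mathbb{Q}$-emm is $q\in\mathrm{Sym}^2H_1(G,\mathbb{Q})$, viewed as a quadratic form on $H^1(G,\mathbb{R})$, that is positive definite, satisfies $q(e_i^* )=1$ for every edge $e_i$ that is not a bridge, and $q(v)\ge1$ for all nonzero $v\in H^1(G,\mathbb{Z})$. It is strong if moreover $q(v)=1$ for $v\in H^1(G,\mathbb{Z})$ implies that $\pm v$ is a coedge. *)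

theory Defs
  imports Complex_Main "Graph_Theory.Digraph"
begin

(* A finite graph (loops and multiple edges allowed) with oriented edges is a
   fin_digraph G: vertices verts G, edges arcs G, edge e oriented from tail G e
   to head G e.  Chains/cochains on edges are functions 'e => _ (only values on
   arcs G matter). *)

inductive ureach :: "('v,'e) pre_digraph \<Rightarrow> 'e set \<Rightarrow> 'v \<Rightarrow> 'v \<Rightarrow> bool"
  for G F where
  refl: "x \<in> verts G \<Longrightarrow> ureach G F x x"
| step: "ureach G F x y \<Longrightarrow> e \<in> F \<Longrightarrow>
          (tail G e = y \<and> head G e = z) \<or> (head G e = y \<and> tail G e = z) \<Longrightarrow> ureach G F x z"

(* bridge: removing e disconnects its endpoints (i.e. increases the number of components) *)
definition is_bridge :: "('v,'e) pre_digraph \<Rightarrow> 'e \<Rightarrow> bool" where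
  "is_bridge G e \<longleftrightarrow> e \<in> arcs G \<and> \<not> ureach G (arcs G - {e}) (tail G e) (head G e)"

(* H_1(G,Q): rational 1-chains supported on arcs G with zero boundary *)
definition cycle_space_rat :: "('v,'e) pre_digraph \<Rightarrow> ('e \<Rightarrow> rat) set" where
  "cycle_space_rat G = {c. (\<forall>e. e \<notin> arcs G \<longrightarrow> c e = 0) \<and>
     (\<forall>x\<in>verts G. (\<Sum>e\<in>arcs G. (if head G e = x then c e else 0)
                                  - (if tail G e = x then c e else 0)) = 0)}"

(* Sym^2 H_1(G,Q), as symmetric tensors in H_1 \<otimes> H_1, i.e. symmetric matrices
   indexed by edges whose columns (hence rows) lie in H_1(G,Q) *)
definition sym2_H1 :: "('v,'e) pre_digraph \<Rightarrow> ('e \<Rightarrow> 'e \<Rightarrow> rat) set" where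
  "sym2_H1 G = {Q. (\<forall>e f. Q e f = Q f e) \<and> (\<forall>f. (\<lambda>e. Q e f) \<in> cycle_space_rat G)}"

definition cobdry_int :: "('v,'e) pre_digraph \<Rightarrow> ('e \<Rightarrow> int) set" where
  "cobdry_int G = {v. \<exists>f :: 'v \<Rightarrow> int. \<forall>e\<in>arcs G. v e = f (head G e) - f (tail G e)}"

definition cobdry_real :: "('v,'e) pre_digraph \<Rightarrow> ('e \<Rightarrow> real) set" where
  "cobdry_real G = {v. \<exists>f :: 'v \<Rightarrow> real. \<forall>e\<in>arcs G. v e = f (head G e) - f (tail G e)}"

(* q viewed as a quadratic form on cochains (descends to H^1(G,R)) *)
definition qform :: "('v,'e) pre_digraph \<Rightarrow> ('e \<Rightarrow> 'e \<Rightarrow> rat) \<Rightarrow> ('e \<Rightarrow> real) \<Rightarrow> real" where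
  "qform G Q v = (\<Sum>e\<in>arcs G. \<Sum>f\<in>arcs G. real_of_rat (Q e f) * v e * v f)"

definition coedge :: "'e \<Rightarrow> 'e \<Rightarrow> int" where
  "coedge e = (\<lambda>e'. if e' = e then 1 else 0)"

definition Q_emm :: "('v,'e) pre_digraph \<Rightarrow> ('e \<Rightarrow> 'e \<Rightarrow> rat) \<Rightarrow> bool" where
  "Q_emm G Q \<longleftrightarrow> Q \<in> sym2_H1 G
     \<and> (\<forall>v. v \<notin> cobdry_real G \<longrightarrow> qform G Q v > 0)
     \<and> (\<forall>e\<in>arcs G. \<not> is_bridge G e \<longrightarrow> qform G Q (\<lambda>x. of_int (coedge e x)) = 1)
     \<and> (\<forall>v :: 'e \<Rightarrow> int. v \<notin> cobdry_int G \<longrightarrow> qform G Q (\<lambda>x. of_int (v x)) \<ge> 1)"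

definition strong_Q_emm :: "('v,'e) pre_digraph \<Rightarrow> ('e \<Rightarrow> 'e \<Rightarrow> rat) \<Rightarrow> bool" where
  "strong_Q_emm G Q \<longleftrightarrow> Q_emm G Q \<and>
     (\<forall>v :: 'e \<Rightarrow> int. qform G Q (\<lambda>x. of_int (v x)) = 1 \<longrightarrow>
        (\<exists>e\<in>arcs G. (\<lambda>x. v x - coedge e x) \<in> cobdry_int G
                   \<or> (\<lambda>x. - v x - coedge e x) \<in> cobdry_int G))"

end

theory Submission
  imports Defs "HOL-Library.FuncSet"
begin

text \<open>
  Let E2 be the set of even subgraphs (the mod 2 cycle space) and \<Lambda> the finite set of
  circulations with values in {-1, 0, 1}; by Euler's decomposition their supports are exactly
  the even subgraphs.  Put q = 2 \<Sigma> w(Z) Z \<otimes> Z over Z \<in> \<Lambda>, where w(Z) = 1 / (|E2| n(Z)) and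
  n(Z) counts the members of \<Lambda> with the support of Z.  Then q(v) is twice the average over
  S \<in> E2 of the mean of \<langle>Z, v\<rangle>^2 over the Z supported on S.

  For a non-bridge e, translation by an even subgraph through e shows that exactly half of
  E2 contains e, whence q(e*) = 1.  For an integral class v, either v has odd sum on some
  even subgraph, and then on exactly half of them, where \<langle>Z, v\<rangle> is odd, so q(v) \<ge> 1 with
  equality only if all |\<langle>Z, v\<rangle>| \<le> 1; or v = dp + 2w and q(v) = 4 q(w), and a descent
  applies.  Finally, if all |\<langle>Z, v\<rangle>| \<le> 1, an L1-minimal representative u of v modulo
  coboundaries admits (by an augmenting path argument) some Z \<in> \<Lambda> agreeing in sign with u on
  its whole support, so that the L1 norm of u is \<langle>Z, u\<rangle> = \<langle>Z, v\<rangle> \<le> 1 and u = \<plusminus>e*.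
\<close>

lemma sum_sym_diff:
  fixes f :: "'a \<Rightarrow> 'r::comm_ring_1"
  assumes "finite S" "finite T"
  shows "sum f (sym_diff S T) = sum f S + sum f T - 2 * sum f (S \<inter> T)"
proof -
  have "sum f (sym_diff S T) = sum f (S - T) + sum f (T - S)"
    by (rule sum.union_disjoint) (use assms in auto)
  moreover have "sum f S = sum f (S \<inter> T) + sum f (S - T)" "sum f T = sum f (T \<inter> S) + sum f (T - S)"
    using assms by (simp_all add: sum.Int_Diff)
  ultimately show ?thesis by (simp add: Int_commute)
qed

text \<open>Translation by a member with property \<phi> is an involution of H exchanging \<phi> and not \<phi>.\<close>

lemma card_half_by_sym_diff:
  assumes "finite H" and closed: "\<And>S T. S \<in> H \<Longrightarrow> T \<in> H \<Longrightarrow> sym_diff S T \<in> H"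
    and additive: "\<And>S T. S \<in> H \<Longrightarrow> T \<in> H \<Longrightarrow> \<phi> (sym_diff S T) \<longleftrightarrow> \<phi> S \<noteq> \<phi> T"
    and S0: "S0 \<in> H" "\<phi> S0"
  shows "2 * card {S\<in>H. \<phi> S} = card H"
proof -
  have "bij_betw (\<lambda>S. sym_diff S S0) {S\<in>H. \<not> \<phi> S} {S\<in>H. \<phi> S}"
    by (rule bij_betwI[where g = "\<lambda>S. sym_diff S S0"]) (use closed additive S0 in auto)
  then have same: "card {S\<in>H. \<not> \<phi> S} = card {S\<in>H. \<phi> S}" by (rule bij_betw_same_card)
  have "card H = card ({S\<in>H. \<phi> S} \<union> {S\<in>H. \<not> \<phi> S})"
    by (rule arg_cong[where f = card]) auto
  also have "\<dots> = card {S\<in>H. \<phi> S} + card {S\<in>H. \<not> \<phi> S}"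
    by (rule card_Un_disjoint) (use \<open>finite H\<close> in auto)
  finally show ?thesis using same by simp
qed

lemma one_le_power2_of_int:
  assumes "(k::int) \<noteq> 0"
  shows "(1::real) \<le> (of_int k)\<^sup>2"
proof -
  have "(1::real) \<le> of_int \<bar>k\<bar>" using assms by linarith
  then have "(1::real) \<le> (of_int \<bar>k\<bar>)\<^sup>2" by (rule one_le_power)
  then show ?thesis by (simp add: power2_abs)
qed

lemma sum_abs_le_1_single:
  fixes u :: "'a \<Rightarrow> int"
  assumes "finite A" "(\<Sum>e\<in>A. \<bar>u e\<bar>) \<le> 1" "h \<in> A" "u h \<noteq> 0"
  shows "\<bar>u h\<bar> = 1" "\<And>e. e \<in> A \<Longrightarrow> e \<noteq> h \<Longrightarrow> u e = 0"
proof -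
  have split: "(\<Sum>e\<in>A. \<bar>u e\<bar>) = \<bar>u h\<bar> + (\<Sum>e\<in>A - {h}. \<bar>u e\<bar>)"
    using assms(1,3) by (simp add: sum.remove)
  have rest: "0 \<le> (\<Sum>e\<in>A - {h}. \<bar>u e\<bar>)" by (simp add: sum_nonneg)
  show uh: "\<bar>u h\<bar> = 1" using assms(2,4) split rest by linarith
  then have "(\<Sum>e\<in>A - {h}. \<bar>u e\<bar>) = 0" using assms(2) split rest by linarith
  then show "\<And>e. e \<in> A \<Longrightarrow> e \<noteq> h \<Longrightarrow> u e = 0"
    using sum_nonneg_eq_0_iff[of "A - {h}" "\<lambda>e. \<bar>u e\<bar>"] assms(1) by auto
qed

context fin_digraph begin

section \<open>Net flow and coboundaries\<close>

definition netflow :: "('b \<Rightarrow> 'r::comm_ring) \<Rightarrow> 'a \<Rightarrow> 'r" where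
  "netflow T x = (\<Sum>e\<in>arcs G. (if head G e = x then T e else 0) - (if tail G e = x then T e else 0))"

lemma netflow_add: "netflow (\<lambda>e. S e + T e) x = netflow S x + netflow T x"
  unfolding netflow_def by (simp add: sum.distrib[symmetric] algebra_simps) (rule sum.cong; auto)

lemma netflow_diff: "netflow (\<lambda>e. S e - T e) x = netflow S x - netflow T x"
  unfolding netflow_def by (simp add: sum_subtractf[symmetric] algebra_simps) (rule sum.cong; auto)

lemma netflow_mult_left: "netflow (\<lambda>e. c * T e) x = c * netflow T x"
  unfolding netflow_def by (simp add: sum_distrib_left algebra_simps) (rule sum.cong; auto)

lemma netflow_sum: "finite I \<Longrightarrow> netflow (\<lambda>e. \<Sum>i\<in>I. T i e) x = (\<Sum>i\<in>I. netflow (T i) x)"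
  by (induction I rule: finite_induct) (simp_all add: netflow_add netflow_def)

lemma netflow_of_int: "netflow (\<lambda>e. of_int (T e)) x = of_int (netflow T x)"
  unfolding netflow_def by (simp add: of_int_sum) (rule sum.cong; auto)

lemma netflow_indicator:
  assumes "e \<in> arcs G"
  shows "netflow (\<lambda>e'. if e' = e then 1 else 0) x
           = (if x = head G e then 1 else 0) - (if x = tail G e then (1::'r::comm_ring_1) else 0)"
proof -
  have "netflow (\<lambda>e'. if e' = e then 1 else 0) x
      = (\<Sum>e'\<in>arcs G. if e' = e then (if head G e = x then 1 else 0) - (if tail G e = x then 1 else 0) else (0::'r))"
    unfolding netflow_def by (rule sum.cong) auto
  then show ?thesis using assms by (auto simp: sum.delta')
qed

lemma sum_mult_coboundary:
  "(\<Sum>e\<in>arcs G. T e * (p (head G e) - p (tail G e))) = (\<Sum>x\<in>verts G. p x * netflow T x)"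
proof -
  have "(\<Sum>x\<in>verts G. p x * netflow T x)
     = (\<Sum>x\<in>verts G. \<Sum>e\<in>arcs G. (if head G e = x then T e * p x else 0) - (if tail G e = x then T e * p x else 0))"
    unfolding netflow_def by (simp add: sum_distrib_left) (rule sum.cong; auto intro!: sum.cong simp: mult.commute)
  also have "\<dots> = (\<Sum>e\<in>arcs G. \<Sum>x\<in>verts G. (if head G e = x then T e * p x else 0) - (if tail G e = x then T e * p x else 0))"
    by (rule sum.swap)
  also have "\<dots> = (\<Sum>e\<in>arcs G. T e * (p (head G e) - p (tail G e)))"
    by (rule sum.cong) (simp_all add: sum_subtractf algebra_simps)
  finally show ?thesis by simp
qed

lemma circulation_orthogonal_coboundary:
  assumes "\<forall>x\<in>verts G. netflow T x = 0"
  shows "(\<Sum>e\<in>arcs G. T e * (p (head G e) - p (tail G e))) = 0"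
  using assms by (simp add: sum_mult_coboundary)

section \<open>Walks along admissible darts\<close>

text \<open>A dart (e, True) traverses the arc e from its tail to its head, (e, False) traverses it
  backwards.  Walks and reachability only use darts admitted by the predicate M.\<close>

definition dart_tail :: "'b \<times> bool \<Rightarrow> 'a" where
  "dart_tail s = (if snd s then tail G (fst s) else head G (fst s))"

definition dart_head :: "'b \<times> bool \<Rightarrow> 'a" where
  "dart_head s = (if snd s then head G (fst s) else tail G (fst s))"

fun dwalk :: "('b \<Rightarrow> bool \<Rightarrow> bool) \<Rightarrow> 'a \<Rightarrow> ('b \<times> bool) list \<Rightarrow> 'a \<Rightarrow> bool" where
  "dwalk M x [] y \<longleftrightarrow> x = y \<and> x \<in> verts G"
| "dwalk M x (s # ws) y \<longleftrightarrow>
     fst s \<in> arcs G \<and> M (fst s) (snd s) \<and> dart_tail s = x \<and> dwalk M (dart_head s) ws y"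

inductive dreach :: "('b \<Rightarrow> bool \<Rightarrow> bool) \<Rightarrow> 'a \<Rightarrow> 'a \<Rightarrow> bool" for M where
  refl: "x \<in> verts G \<Longrightarrow> dreach M x x"
| step: "dreach M x (dart_tail (e, d)) \<Longrightarrow> e \<in> arcs G \<Longrightarrow> M e d \<Longrightarrow> dreach M x (dart_head (e, d))"

lemma dwalk_start_in_verts: "dwalk M x ws y \<Longrightarrow> x \<in> verts G"
  by (cases ws) (auto simp: dart_tail_def)

lemma dwalk_append: "dwalk M x (as @ bs) y \<longleftrightarrow> (\<exists>z. dwalk M x as z \<and> dwalk M z bs y)"
  by (induction as arbitrary: x) (auto dest: dwalk_start_in_verts)

lemma dreach_in_verts: "dreach M x y \<Longrightarrow> x \<in> verts G \<and> y \<in> verts G"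
  by (induction rule: dreach.induct) (auto simp: dart_head_def)

lemma dreach_forward: "dreach M x (tail G e) \<Longrightarrow> e \<in> arcs G \<Longrightarrow> M e True \<Longrightarrow> dreach M x (head G e)"
  using dreach.step[of M x e True] by (simp add: dart_tail_def dart_head_def)

lemma dreach_backward: "dreach M x (head G e) \<Longrightarrow> e \<in> arcs G \<Longrightarrow> M e False \<Longrightarrow> dreach M x (tail G e)"
  using dreach.step[of M x e False] by (simp add: dart_tail_def dart_head_def)

lemma dreach_arc_iff:
  assumes "e \<in> B" "B \<subseteq> arcs G"
  shows "dreach (\<lambda>e d. e \<in> B) x (head G e) \<longleftrightarrow> dreach (\<lambda>e d. e \<in> B) x (tail G e)"
  using assms dreach_forward dreach_backward by blast

lemma dreach_imp_dwalk: "dreach M x y \<Longrightarrow> \<exists>ws. dwalk M x ws y"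
proof (induction rule: dreach.induct)
  case (refl x)
  then show ?case by (intro exI[of _ "[]"]) simp
next
  case (step x e d)
  then obtain ws where "dwalk M x ws (dart_tail (e, d))" by blast
  moreover have "dwalk M (dart_tail (e, d)) [(e, d)] (dart_head (e, d))"
    using step by (auto simp: dart_head_def)
  ultimately show ?case using dwalk_append by blast
qed

lemma ureach_imp_dreach:
  assumes "F \<subseteq> arcs G" "ureach G F x y"
  shows "dreach (\<lambda>e d. e \<in> F) x y"
  using assms(2)
proof (induction rule: ureach.induct)
  case (refl x)
  then show ?case by (rule dreach.refl)
next
  case (step x y e z)
  then show ?case using assms(1) dreach_forward dreach_backward by blast
qed

definition dart_vec :: "'b \<times> bool \<Rightarrow> 'b \<Rightarrow> int" where
  "dart_vec s e = (if e = fst s then (if snd s then 1 else -1) else 0)"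

definition walk_vec :: "('b \<times> bool) list \<Rightarrow> 'b \<Rightarrow> int" where
  "walk_vec ws e = (\<Sum>s\<leftarrow>ws. dart_vec s e)"

lemma netflow_dart_vec:
  assumes "fst s \<in> arcs G"
  shows "netflow (dart_vec s) x = (if x = dart_head s then 1 else 0) - (if x = dart_tail s then 1 else 0)"
proof -
  have "netflow (dart_vec s) x = (\<Sum>e\<in>arcs G. if e = fst s then
      (if head G e = x then dart_vec s e else 0) - (if tail G e = x then dart_vec s e else 0) else 0)"
    unfolding netflow_def by (rule sum.cong) (auto simp: dart_vec_def)
  also have "\<dots> = (if head G (fst s) = x then dart_vec s (fst s) else 0)
      - (if tail G (fst s) = x then dart_vec s (fst s) else 0)"
    using assms by (simp add: sum.delta')
  finally show ?thesis by (auto simp: dart_vec_def dart_tail_def dart_head_def)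
qed

lemma netflow_walk_vec:
  "dwalk M x ws y \<Longrightarrow> netflow (walk_vec ws) z = (if z = y then 1 else 0) - (if z = x then 1 else 0)"
proof (induction ws arbitrary: x)
  case Nil
  then show ?case by (simp add: walk_vec_def netflow_def)
next
  case (Cons s ws)
  have "walk_vec (s # ws) = (\<lambda>e. dart_vec s e + walk_vec ws e)"
    by (auto simp: walk_vec_def)
  then have "netflow (walk_vec (s # ws)) z = netflow (dart_vec s) z + netflow (walk_vec ws) z"
    by (simp add: netflow_add)
  with Cons.IH[of "dart_head s"] Cons.prems show ?case by (auto simp add: netflow_dart_vec)
qed

lemma walk_vec_distinct_arcs:
  assumes "distinct (map fst ws)" "walk_vec ws e \<noteq> 0"
  shows "\<exists>s\<in>set ws. fst s = e \<and> walk_vec ws e = (if snd s then 1 else -1)"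
  using assms
proof (induction ws)
  case (Cons s ws)
  show ?case
  proof (cases "e = fst s")
    case True
    with Cons.prems have "e \<notin> fst ` set ws" by auto
    then have "walk_vec ws e = 0"
      by (induction ws) (auto simp: walk_vec_def dart_vec_def)
    with True show ?thesis by (auto simp: walk_vec_def dart_vec_def)
  next
    case False
    with Cons show ?thesis by (auto simp: walk_vec_def dart_vec_def)
  qed
qed (simp add: walk_vec_def)

text \<open>Between two uses of the same arc a walk can be cut short, whatever the relative
  orientation of the two uses.\<close>

lemma shortest_dwalk_distinct_arcs:
  assumes walk: "dwalk M x ws y" and shortest: "\<And>ws'. dwalk M x ws' y \<Longrightarrow> length ws \<le> length ws'"
  shows "distinct (map fst ws)"
proof (rule ccontr)
  assume "\<not> distinct (map fst ws)"
  then obtain as a bs cs where "map fst ws = as @ [a] @ bs @ [a] @ cs"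
    using not_distinct_decomp by blast
  then obtain ws1 r1 ws' where "ws = ws1 @ r1 # ws'" "fst r1 = a" "map fst ws' = bs @ [a] @ cs"
    by (auto simp: map_eq_append_conv) (metis map_eq_append_conv)
  moreover obtain ws2 r2 ws3 where "ws' = ws2 @ r2 # ws3" "fst r2 = a"
    using calculation(3) by (auto simp: map_eq_append_conv)
  ultimately have ws: "ws = ws1 @ [r1] @ ws2 @ [r2] @ ws3" and "fst r1 = fst r2"
    by simp_all
  from walk obtain z1 z2 z3 where w1: "dwalk M x ws1 z1" and w2: "dwalk M z1 [r1] z2"
      and w4: "dwalk M z3 (r2 # ws3) y"
    unfolding ws dwalk_append by auto
  have "dwalk M z1 (r2 # ws3) y \<or> dwalk M z1 ws3 y"
  proof (cases "snd r1 = snd r2")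
    case True
    then show ?thesis using w2 w4 \<open>fst r1 = fst r2\<close> by (auto simp: dart_tail_def)
  next
    case False
    then show ?thesis using w2 w4 \<open>fst r1 = fst r2\<close> by (auto simp: dart_tail_def dart_head_def)
  qed
  then have "dwalk M x (ws1 @ r2 # ws3) y \<or> dwalk M x (ws1 @ ws3) y"
    using w1 dwalk_append by blast
  then show False using shortest ws by fastforce
qed

lemma dreach_path_vec:
  assumes "dreach M x y"
  obtains T :: "'b \<Rightarrow> int" where "\<And>e. T e \<in> {-1, 0, 1}"
    and "\<And>e. T e \<noteq> 0 \<Longrightarrow> e \<in> arcs G \<and> M e (T e > 0)"
    and "\<And>z. netflow T z = (if z = y then 1 else 0) - (if z = x then 1 else 0)"
proof -
  obtain ws0 where "dwalk M x ws0 y" using dreach_imp_dwalk[OF assms] by blast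
  then obtain ws where ws: "dwalk M x ws y" and shortest: "\<And>ws'. dwalk M x ws' y \<Longrightarrow> length ws \<le> length ws'"
    using ex_has_least_nat[of "\<lambda>ws. dwalk M x ws y" ws0 length] by blast
  have distinct: "distinct (map fst ws)"
    using shortest_dwalk_distinct_arcs[OF ws shortest] .
  have darts: "\<forall>s\<in>set ws. fst s \<in> arcs G \<and> M (fst s) (snd s)"
    using ws by (induction ws arbitrary: x) auto
  show ?thesis
  proof
    fix e
    show "walk_vec ws e \<in> {-1, 0, 1}"
      using walk_vec_distinct_arcs[OF distinct, of e] by (cases "walk_vec ws e = 0") auto
    assume "walk_vec ws e \<noteq> 0"
    then obtain s where "s \<in> set ws" "fst s = e" "walk_vec ws e = (if snd s then 1 else -1)"
      using walk_vec_distinct_arcs[OF distinct] by blast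
    moreover have "walk_vec ws e > 0 \<longleftrightarrow> snd s"
      using calculation(3) by simp
    ultimately show "e \<in> arcs G \<and> M e (walk_vec ws e > 0)"
      using darts by auto
  qed (rule netflow_walk_vec[OF ws])
qed

section \<open>Unit circulations and potentials\<close>

definition unit_circulations :: "('b \<Rightarrow> int) set" where
  "unit_circulations = {Z. (\<forall>e. e \<notin> arcs G \<longrightarrow> Z e = 0) \<and> (\<forall>e. Z e \<in> {-1, 0, 1})
                          \<and> (\<forall>x\<in>verts G. netflow Z x = 0)}"

definition support :: "('b \<Rightarrow> int) \<Rightarrow> 'b set" where
  "support Z = {e \<in> arcs G. Z e \<noteq> 0}"

lemma finite_unit_circulations: "finite unit_circulations"
proof (rule inj_on_finite[where f = "\<lambda>Z. restrict Z (arcs G)" and B = "\<Pi>\<^sub>E e\<in>arcs G. {-1, 0, 1}"])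
  show "inj_on (\<lambda>Z. restrict Z (arcs G)) unit_circulations"
  proof (rule inj_onI)
    fix Z Z' assume "Z \<in> unit_circulations" "Z' \<in> unit_circulations"
      and eq: "restrict Z (arcs G) = restrict Z' (arcs G)"
    show "Z = Z'"
    proof
      fix e
      show "Z e = Z' e"
        using \<open>Z \<in> _\<close> \<open>Z' \<in> _\<close> fun_cong[OF eq, of e]
        by (auto simp: unit_circulations_def split: if_splits)
    qed
  qed
  show "(\<lambda>Z. restrict Z (arcs G)) ` unit_circulations \<subseteq> (\<Pi>\<^sub>E e\<in>arcs G. {-1, 0, 1})"
    by (auto simp: unit_circulations_def)
qed (auto intro: finite_PiE)

lemma zero_in_unit_circulations: "(\<lambda>e. 0) \<in> unit_circulations"
  by (simp add: unit_circulations_def netflow_def)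

lemma unit_circulation_orthogonal_coboundary:
  fixes p :: "'a \<Rightarrow> 'r::comm_ring_1"
  assumes "Z \<in> unit_circulations"
  shows "(\<Sum>e\<in>arcs G. of_int (Z e) * (p (head G e) - p (tail G e))) = 0"
  using assms circulation_orthogonal_coboundary[of "\<lambda>e. of_int (Z e)" p]
  by (simp add: unit_circulations_def netflow_of_int)

lemma path_closes_to_unit_circulation:
  assumes e: "e \<in> arcs G" and B: "B \<subseteq> arcs G" "e \<notin> B"
    and path: "dreach (\<lambda>e' d. e' \<in> B) (tail G e) (head G e)"
  obtains Z where "Z \<in> unit_circulations" "Z e = 1" "\<And>e'. Z e' \<noteq> 0 \<Longrightarrow> e' \<in> insert e B"
proof -
  obtain T :: "'b \<Rightarrow> int" where T1: "\<And>e. T e \<in> {-1, 0, 1}"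
    and T2: "\<And>e'. T e' \<noteq> 0 \<Longrightarrow> e' \<in> arcs G \<and> e' \<in> B"
    and T3: "\<And>x. netflow T x = (if x = head G e then 1 else 0) - (if x = tail G e then 1 else 0)"
    using dreach_path_vec[OF path] by metis
  define Z where "Z = (\<lambda>e'. (if e' = e then 1 else 0) - T e')"
  have Te: "T e = 0" using T2 B by blast
  have "Z \<in> unit_circulations"
    unfolding unit_circulations_def
  proof (intro CollectI conjI allI impI ballI)
    fix e'
    show "e' \<notin> arcs G \<Longrightarrow> Z e' = 0" using T2 e by (auto simp: Z_def)
    show "Z e' \<in> {-1, 0, 1}" using T1[of e'] Te by (auto simp: Z_def)
  next
    fix x
    show "netflow Z x = 0"
      unfolding Z_def netflow_diff using T3 netflow_indicator[OF e, of x] by simp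
  qed
  moreover have "Z e = 1" using Te by (simp add: Z_def)
  moreover have "Z e' \<noteq> 0 \<Longrightarrow> e' \<in> insert e B" for e'
    using T2[of e'] by (cases "e' = e") (auto simp: Z_def)
  ultimately show ?thesis using that by blast
qed

lemma potential_modulo_extend_cycle:
  fixes v :: "'b \<Rightarrow> 'r::comm_ring_1" and N :: "'r \<Rightarrow> bool"
  assumes N0: "N 0" and Nadd: "\<And>a b. N a \<Longrightarrow> N b \<Longrightarrow> N (a + b)" and Nneg: "\<And>a. N a \<Longrightarrow> N (- a)"
    and circ: "\<And>Z. Z \<in> unit_circulations \<Longrightarrow> N (\<Sum>e\<in>arcs G. of_int (Z e) * v e)"
    and p: "\<forall>e'\<in>B. N (v e' - (p (head G e') - p (tail G e')))"
    and e: "e \<in> arcs G" and B: "B \<subseteq> arcs G" "e \<notin> B"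
    and path: "dreach (\<lambda>e' d. e' \<in> B) (tail G e) (head G e)"
  shows "N (v e - (p (head G e) - p (tail G e)))"
proof -
  define r where "r e' = v e' - (p (head G e') - p (tail G e'))" for e'
  obtain Z where Z: "Z \<in> unit_circulations" "Z e = 1" "\<And>e'. Z e' \<noteq> 0 \<Longrightarrow> e' \<in> insert e B"
    using path_closes_to_unit_circulation[OF e B path] by blast
  have N_sum: "N (sum g A)" if "\<And>i. i \<in> A \<Longrightarrow> N (g i)" for g :: "'b \<Rightarrow> 'r" and A
    using that by (induction A rule: infinite_finite_induct) (auto simp: N0 Nadd)
  have rest: "N (\<Sum>e'\<in>arcs G - {e}. of_int (Z e') * r e')"
  proof (rule N_sum)
    fix e' assume e': "e' \<in> arcs G - {e}"
    show "N (of_int (Z e') * r e')"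
    proof (cases "Z e' = 0")
      case False
      then have "N (r e')" using Z(3) e' p by (auto simp: r_def)
      moreover have "Z e' = 1 \<or> Z e' = -1" using Z(1) False by (auto simp: unit_circulations_def)
      ultimately show ?thesis using Nneg by auto
    qed (simp add: N0)
  qed
  have "(\<Sum>e'\<in>arcs G. of_int (Z e') * v e') = (\<Sum>e'\<in>arcs G. of_int (Z e') * r e')
      + (\<Sum>e'\<in>arcs G. of_int (Z e') * (p (head G e') - p (tail G e')))"
    by (simp add: r_def sum.distrib[symmetric] algebra_simps)
  also have "\<dots> = (\<Sum>e'\<in>arcs G. of_int (Z e') * r e')"
    using unit_circulation_orthogonal_coboundary[OF Z(1)] by simp
  also have "\<dots> = r e + (\<Sum>e'\<in>arcs G - {e}. of_int (Z e') * r e')"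
    using e Z(2) by (simp add: sum.remove)
  finally have "N (r e + (\<Sum>e'\<in>arcs G - {e}. of_int (Z e') * r e'))"
    using circ[OF Z(1)] by simp
  from Nadd[OF this Nneg[OF rest]] show ?thesis by (simp add: r_def)
qed

lemma potential_modulo_extend_cut:
  fixes v :: "'b \<Rightarrow> 'r::comm_ring_1" and N :: "'r \<Rightarrow> bool"
  assumes N0: "N 0"
    and p: "\<forall>e'\<in>B. N (v e' - (p (head G e') - p (tail G e')))"
    and e: "e \<in> arcs G" and B: "B \<subseteq> arcs G"
    and no_path: "\<not> dreach (\<lambda>e' d. e' \<in> B) (tail G e) (head G e)"
  shows "\<exists>p'. \<forall>e'\<in>insert e B. N (v e' - (p' (head G e') - p' (tail G e')))"
proof -
  define R where "R = {x. dreach (\<lambda>e' d. e' \<in> B) (tail G e) x}"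
  define c where "c = v e - (p (head G e) - p (tail G e))"
  define p' where "p' x = p x - (if x \<in> R then c else 0)" for x
  have "tail G e \<in> R" using e by (auto simp: R_def intro: dreach.refl)
  moreover have "head G e \<notin> R" using no_path by (simp add: R_def)
  moreover have "head G e' \<in> R \<longleftrightarrow> tail G e' \<in> R" if "e' \<in> B" for e'
    using dreach_arc_iff[OF that B] by (simp add: R_def)
  ultimately have "N (v e' - (p' (head G e') - p' (tail G e')))" if "e' \<in> insert e B" for e'
    using that p N0 by (auto simp: p'_def c_def)
  then show ?thesis by blast
qed

text \<open>Arcs are added one at a time: an arc closing a cycle with the earlier ones is already
  consistent with the potential, any other arc is fixed by shifting the potential on the vertices
  reachable from its tail.\<close>

lemma exists_potential_modulo:
  fixes v :: "'b \<Rightarrow> 'r::comm_ring_1" and N :: "'r \<Rightarrow> bool"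
  assumes N0: "N 0" and Nadd: "\<And>a b. N a \<Longrightarrow> N b \<Longrightarrow> N (a + b)" and Nneg: "\<And>a. N a \<Longrightarrow> N (- a)"
    and circ: "\<And>Z. Z \<in> unit_circulations \<Longrightarrow> N (\<Sum>e\<in>arcs G. of_int (Z e) * v e)"
  shows "\<exists>p. \<forall>e\<in>arcs G. N (v e - (p (head G e) - p (tail G e)))"
proof -
  have "finite B \<Longrightarrow> B \<subseteq> arcs G \<Longrightarrow> \<exists>p. \<forall>e\<in>B. N (v e - (p (head G e) - p (tail G e)))" for B
  proof (induction B rule: finite_induct)
    case (insert e B)
    have e: "e \<in> arcs G" and B: "B \<subseteq> arcs G" using insert.prems by auto
    obtain p where p: "\<forall>e'\<in>B. N (v e' - (p (head G e') - p (tail G e')))"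
      using insert.IH[OF B] by blast
    show ?case
    proof (cases "dreach (\<lambda>e' d. e' \<in> B) (tail G e) (head G e)")
      case True
      have "N (v e - (p (head G e) - p (tail G e)))"
        by (rule potential_modulo_extend_cycle[OF N0 Nadd Nneg circ p e B insert.hyps(2) True])
      with p show ?thesis by blast
    next
      case False
      then show ?thesis using potential_modulo_extend_cut[OF N0 p e B] by blast
    qed
  qed simp
  from this[OF finite_arcs order_refl] show ?thesis .
qed

section \<open>Even subgraphs\<close>

definition degree_in :: "'b set \<Rightarrow> 'a \<Rightarrow> int" where
  "degree_in S x = (\<Sum>e\<in>S. (if head G e = x then 1 else 0) + (if tail G e = x then 1 else 0))"

definition even_subgraphs :: "'b set set" where
  "even_subgraphs = {S. S \<subseteq> arcs G \<and> (\<forall>x\<in>verts G. even (degree_in S x))}"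

lemma finite_even_subgraphs: "finite even_subgraphs"
  by (rule finite_subset[of _ "Pow (arcs G)"]) (auto simp: even_subgraphs_def)

lemma empty_in_even_subgraphs: "{} \<in> even_subgraphs"
  by (simp add: even_subgraphs_def degree_in_def)

lemma even_subgraph_finite: "S \<in> even_subgraphs \<Longrightarrow> finite S"
  by (auto simp: even_subgraphs_def intro: finite_subset)

lemma sym_diff_in_even_subgraphs:
  assumes "S \<in> even_subgraphs" "T \<in> even_subgraphs"
  shows "sym_diff S T \<in> even_subgraphs"
  using assms even_subgraph_finite[OF assms(1)] even_subgraph_finite[OF assms(2)]
  by (auto simp: even_subgraphs_def degree_in_def sum_sym_diff)

lemma support_in_even_subgraphs:
  assumes Z: "Z \<in> unit_circulations"
  shows "support Z \<in> even_subgraphs"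
proof -
  have "even (degree_in (support Z) x)" if x: "x \<in> verts G" for x
  proof -
    have "netflow Z x = (\<Sum>e\<in>support Z. (if head G e = x then Z e else 0) - (if tail G e = x then Z e else 0))"
      unfolding netflow_def by (rule sum.mono_neutral_right) (auto simp: support_def)
    then have "degree_in (support Z) x = degree_in (support Z) x - netflow Z x"
      using Z x by (simp add: unit_circulations_def)
    also have "\<dots> = (\<Sum>e\<in>support Z. ((if head G e = x then 1 else 0) + (if tail G e = x then 1 else 0))
          - ((if head G e = x then Z e else 0) - (if tail G e = x then Z e else 0)))"
      unfolding degree_in_def \<open>netflow Z x = _\<close> by (simp add: sum_subtractf)
    also have "even \<dots>"
    proof (rule dvd_sum)
      fix e assume "e \<in> support Z"
      then have "Z e = 1 \<or> Z e = -1" using Z by (auto simp: support_def unit_circulations_def)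
      then show "2 dvd ((if head G e = x then 1 else 0) + (if tail G e = x then 1 else 0)
          - ((if head G e = x then Z e else 0) - (if tail G e = x then Z e else 0)))"
        by auto
    qed
    finally show ?thesis .
  qed
  then show ?thesis by (auto simp: even_subgraphs_def support_def)
qed

text \<open>If not, the vertices reachable from the tail of e0 within S - {e0} would have odd total
  degree.\<close>

lemma even_subgraph_arc_on_cycle:
  assumes S: "S \<in> even_subgraphs" and e0: "e0 \<in> S"
  shows "dreach (\<lambda>e d. e \<in> S - {e0}) (tail G e0) (head G e0)"
proof (rule ccontr)
  assume no_path: "\<not> ?thesis"
  have SA: "S \<subseteq> arcs G" and S_even: "\<forall>x\<in>verts G. even (degree_in S x)"
    using S by (auto simp: even_subgraphs_def)
  have fS: "finite S" using even_subgraph_finite[OF S] .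
  define R where "R = {x. dreach (\<lambda>e d. e \<in> S - {e0}) (tail G e0) x}"
  have RV: "R \<subseteq> verts G" using dreach_in_verts by (auto simp: R_def)
  have fR: "finite R" using finite_subset[OF RV] by simp
  have tR: "tail G e0 \<in> R" unfolding R_def using e0 SA by (blast intro: dreach.refl tail_in_verts)
  have hR: "head G e0 \<notin> R" using no_path by (simp add: R_def)
  have closed: "head G e \<in> R \<longleftrightarrow> tail G e \<in> R" if "e \<in> S - {e0}" for e
    using dreach_arc_iff[OF that] SA by (auto simp: R_def)
  have "(\<Sum>x\<in>R. degree_in (S - {e0}) x)
      = (\<Sum>e\<in>S - {e0}. \<Sum>x\<in>R. (if head G e = x then 1 else 0) + (if tail G e = x then 1 else 0))"
    unfolding degree_in_def by (rule sum.swap)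
  also have "\<dots> = (\<Sum>e\<in>S - {e0}. (if head G e \<in> R then 1 else 0) + (if tail G e \<in> R then 1 else 0))"
    using fR by (simp add: sum.distrib)
  also have "even \<dots>"
    by (rule dvd_sum) (use closed in auto)
  finally have even_rest: "even (\<Sum>x\<in>R. degree_in (S - {e0}) x)" .
  have "degree_in S x = degree_in (S - {e0}) x + ((if head G e0 = x then 1 else 0) + (if tail G e0 = x then 1 else 0))" for x
    unfolding degree_in_def using fS e0 by (simp add: sum.remove add.commute)
  then have "(\<Sum>x\<in>R. degree_in S x) = (\<Sum>x\<in>R. degree_in (S - {e0}) x)
      + (\<Sum>x\<in>R. (if head G e0 = x then 1 else 0) + (if tail G e0 = x then 1 else 0))"
    by (simp add: sum.distrib)
  also have "(\<Sum>x\<in>R. (if head G e0 = x then 1 else 0) + (if tail G e0 = x then 1 else 0)) = (1::int)"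
    using fR hR tR by (simp add: sum.distrib)
  finally have "(\<Sum>x\<in>R. degree_in S x) = (\<Sum>x\<in>R. degree_in (S - {e0}) x) + 1" .
  moreover have "even (\<Sum>x\<in>R. degree_in S x)" by (rule dvd_sum) (use S_even RV in auto)
  ultimately show False using even_rest by simp
qed

text \<open>Euler: peel off one cycle at a time.\<close>

lemma even_subgraph_is_support:
  assumes "S \<in> even_subgraphs"
  shows "\<exists>Z\<in>unit_circulations. support Z = S"
  using assms
proof (induction "card S" arbitrary: S rule: less_induct)
  case less
  have SA: "S \<subseteq> arcs G" using less.prems by (auto simp: even_subgraphs_def)
  have fS: "finite S" using even_subgraph_finite[OF less.prems] .
  show ?case
  proof (cases "S = {}")
    case True
    then show ?thesis using zero_in_unit_circulations by (intro bexI[of _ "\<lambda>e. 0"]) (auto simp: support_def)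
  next
    case False
    then obtain e0 where e0: "e0 \<in> S" by blast
    obtain Z0 where Z0: "Z0 \<in> unit_circulations" "Z0 e0 = 1" "\<And>e. Z0 e \<noteq> 0 \<Longrightarrow> e \<in> insert e0 (S - {e0})"
      using path_closes_to_unit_circulation[OF _ _ _ even_subgraph_arc_on_cycle[OF less.prems e0]] e0 SA
      by blast
    have sZ0: "support Z0 \<subseteq> S" using Z0(3) e0 by (auto simp: support_def)
    define S' where "S' = S - support Z0"
    have "S' = sym_diff S (support Z0)" using sZ0 by (auto simp: S'_def)
    then have "S' \<in> even_subgraphs"
      using sym_diff_in_even_subgraphs[OF less.prems support_in_even_subgraphs[OF Z0(1)]] by simp
    moreover have "card S' < card S"
      unfolding S'_def using fS e0 SA Z0(2) by (intro psubset_card_mono) (auto simp: support_def)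
    ultimately obtain Z' where Z': "Z' \<in> unit_circulations" "support Z' = S'" using less.hyps by blast
    define Z where "Z = (\<lambda>e. Z0 e + Z' e)"
    have disj: "Z0 e = 0 \<or> Z' e = 0" for e
      using Z'(2) Z0(1) Z'(1) by (auto simp: S'_def support_def unit_circulations_def)
    have "Z e \<noteq> 0 \<longleftrightarrow> Z0 e \<noteq> 0 \<or> Z' e \<noteq> 0" for e
      using disj[of e] by (auto simp: Z_def)
    then have "support Z = S" using Z'(2) sZ0 by (auto simp: S'_def support_def)
    moreover have "Z \<in> unit_circulations"
      unfolding unit_circulations_def
    proof (intro CollectI conjI allI impI ballI)
      fix e
      show "e \<notin> arcs G \<Longrightarrow> Z e = 0" using Z0(1) Z'(1) by (auto simp: Z_def unit_circulations_def)
      show "Z e \<in> {-1, 0, 1}" using Z0(1) Z'(1) disj[of e] by (auto simp: Z_def unit_circulations_def)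
    next
      fix x assume "x \<in> verts G"
      then show "netflow Z x = 0"
        using Z0(1) Z'(1) by (simp add: Z_def netflow_add unit_circulations_def)
    qed
    ultimately show ?thesis by blast
  qed
qed

lemma nonbridge_in_even_subgraph:
  assumes e: "e \<in> arcs G" and nb: "\<not> is_bridge G e"
  obtains S where "S \<in> even_subgraphs" "e \<in> S"
proof -
  have "ureach G (arcs G - {e}) (tail G e) (head G e)" using nb e by (simp add: is_bridge_def)
  then have "dreach (\<lambda>e' d. e' \<in> arcs G - {e}) (tail G e) (head G e)"
    by (rule ureach_imp_dreach[rotated]) auto
  then obtain Z where "Z \<in> unit_circulations" "Z e = 1"
    using path_closes_to_unit_circulation[OF e, of "arcs G - {e}"] by auto
  then show ?thesis using that[of "support Z"] support_in_even_subgraphs e by (auto simp: support_def)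
qed

section \<open>Conformal circulations\<close>

definition conformal :: "('b \<Rightarrow> int) \<Rightarrow> ('b \<Rightarrow> int) \<Rightarrow> bool" where
  "conformal u Z \<longleftrightarrow> Z \<in> unit_circulations \<and> (\<forall>e\<in>arcs G. u e \<noteq> 0 \<longrightarrow> Z e \<noteq> 0 \<longrightarrow> Z e = sgn (u e))"

text \<open>Darts along which a circulation conformal to u can be enlarged to also cover the arc f:
  arcs carrying Z may only be traversed against Z, and only where u vanishes; other arcs carrying
  u only in the direction of u.\<close>

definition augmenting :: "('b \<Rightarrow> int) \<Rightarrow> ('b \<Rightarrow> int) \<Rightarrow> 'b \<Rightarrow> 'b \<Rightarrow> bool \<Rightarrow> bool" where
  "augmenting u Z f e d \<longleftrightarrow> e \<noteq> f \<and>
     (if Z e \<noteq> 0 then u e = 0 \<and> d = (Z e < 0) else (u e \<noteq> 0 \<longrightarrow> d = (u e > 0)))"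

lemma conformal_augment:
  assumes Z: "conformal u Z" and f: "f \<in> arcs G" "u f \<noteq> 0" "Z f = 0"
    and path: "dreach (augmenting u Z f) (dart_head (f, u f > 0)) (dart_tail (f, u f > 0))"
  obtains Z' where "conformal u Z'" "Z' f \<noteq> 0" "\<And>e. e \<in> arcs G \<Longrightarrow> u e \<noteq> 0 \<Longrightarrow> Z e \<noteq> 0 \<Longrightarrow> Z' e \<noteq> 0"
proof -
  have Zv: "\<And>e. Z e \<in> {-1, 0, 1}" "\<And>e. e \<notin> arcs G \<Longrightarrow> Z e = 0" "\<And>x. x \<in> verts G \<Longrightarrow> netflow Z x = 0"
    and Zc: "\<And>e. e \<in> arcs G \<Longrightarrow> u e \<noteq> 0 \<Longrightarrow> Z e \<noteq> 0 \<Longrightarrow> Z e = sgn (u e)"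
    using Z by (auto simp: conformal_def unit_circulations_def)
  obtain T :: "'b \<Rightarrow> int" where T1: "\<And>e. T e \<in> {-1, 0, 1}"
    and T2: "\<And>e. T e \<noteq> 0 \<Longrightarrow> e \<in> arcs G \<and> augmenting u Z f e (T e > 0)"
    and T3: "\<And>x. netflow T x = (if x = dart_tail (f, u f > 0) then 1 else 0) - (if x = dart_head (f, u f > 0) then 1 else 0)"
    using dreach_path_vec[OF path] by metis
  define s where "s = sgn (u f)"
  define Z' where "Z' = (\<lambda>e. Z e + T e + s * (if e = f then 1 else 0))"
  have Tf: "T f = 0" using T2 by (auto simp: augmenting_def)
  have TZ: "T e = - Z e \<and> u e = 0" if "T e \<noteq> 0" "Z e \<noteq> 0" for e
    using that T2[of e] T1[of e] Zv(1)[of e] by (auto simp: augmenting_def)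
  have TZ0: "T e = sgn (u e)" if "T e \<noteq> 0" "Z e = 0" "u e \<noteq> 0" for e
    using that T2[of e] T1[of e] by (auto simp: augmenting_def)
  have s: "s = 1 \<or> s = -1" using f by (auto simp: s_def sgn_if)
  have circ: "Z' \<in> unit_circulations"
    unfolding unit_circulations_def
  proof (intro CollectI conjI allI impI ballI)
    fix e
    show "e \<notin> arcs G \<Longrightarrow> Z' e = 0" using Zv(2) T2 f(1) by (auto simp: Z'_def)
    show "Z' e \<in> {-1, 0, 1}"
    proof (cases "e = f")
      case True
      then show ?thesis using Tf f s by (auto simp: Z'_def)
    next
      case False
      then show ?thesis using TZ[of e] T1[of e] Zv(1)[of e]
        by (cases "T e = 0"; cases "Z e = 0") (auto simp: Z'_def)
    qed
  next
    fix x assume x: "x \<in> verts G"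
    have "netflow Z' x = netflow Z x + netflow T x + s * netflow (\<lambda>e. if e = f then 1 else 0) x"
      unfolding Z'_def by (simp add: netflow_add netflow_mult_left)
    also have "\<dots> = 0"
      using Zv(3)[OF x] T3 netflow_indicator[OF f(1), of x] f(2)
      by (auto simp: s_def dart_tail_def dart_head_def sgn_if)
    finally show "netflow Z' x = 0" .
  qed
  have sign: "Z' e = sgn (u e)" if "e \<in> arcs G" "u e \<noteq> 0" "Z' e \<noteq> 0" for e
  proof (cases "e = f")
    case True
    then show ?thesis using Tf f by (simp add: Z'_def s_def)
  next
    case False
    then show ?thesis
      using that Zc[of e] TZ[of e] TZ0[of e] by (cases "T e = 0"; cases "Z e = 0") (auto simp: Z'_def)
  qed
  show ?thesis
  proof
    show "conformal u Z'" using circ sign by (simp add: conformal_def)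
    show "Z' f \<noteq> 0" using Tf f s by (auto simp: Z'_def)
    show "Z' e \<noteq> 0" if "e \<in> arcs G" "u e \<noteq> 0" "Z e \<noteq> 0" for e
      using that TZ[of e] f by (cases "T e = 0") (auto simp: Z'_def)
  qed
qed

text \<open>If the augmenting darts did not lead back around f, shifting the potential by the
  indicator of the reachable set would strictly decrease the L1 norm of u.\<close>

lemma L1_minimal_augmenting_path:
  fixes u :: "'b \<Rightarrow> int"
  assumes min: "\<And>p::'a \<Rightarrow> int. (\<Sum>e\<in>arcs G. \<bar>u e\<bar>) \<le> (\<Sum>e\<in>arcs G. \<bar>u e - (p (head G e) - p (tail G e))\<bar>)"
    and Z: "conformal u Z" and f: "f \<in> arcs G" "u f \<noteq> 0" "Z f = 0"
  shows "dreach (augmenting u Z f) (dart_head (f, u f > 0)) (dart_tail (f, u f > 0))"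
proof (rule ccontr)
  let ?M = "augmenting u Z f"
  assume no_path: "\<not> ?thesis"
  have Zv: "\<And>e. Z e \<in> {-1, 0, 1}" and Zc: "\<And>e. e \<in> arcs G \<Longrightarrow> u e \<noteq> 0 \<Longrightarrow> Z e \<noteq> 0 \<Longrightarrow> Z e = sgn (u e)"
    using Z by (auto simp: conformal_def unit_circulations_def)
  define R where "R = {x. dreach ?M (dart_head (f, u f > 0)) x}"
  define p :: "'a \<Rightarrow> int" where "p x = (if x \<in> R then 1 else 0)" for x
  define c where "c e = p (head G e) - p (tail G e)" for e
  have c_vals: "c e \<in> {-1, 0, 1}" for e by (auto simp: c_def p_def)
  have c_pos: "\<not> ?M e False" if "e \<in> arcs G" "c e = 1" for e
    using that dreach_backward[of ?M _ e] by (auto simp: c_def p_def R_def split: if_splits)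
  have c_neg: "\<not> ?M e True" if "e \<in> arcs G" "c e = -1" for e
    using that dreach_forward[of ?M _ e] by (auto simp: c_def p_def R_def split: if_splits)
  have "dart_head (f, u f > 0) \<in> verts G" using f by (simp add: dart_head_def)
  then have "dart_head (f, u f > 0) \<in> R" by (simp add: R_def dreach.refl)
  moreover have "dart_tail (f, u f > 0) \<notin> R" using no_path by (simp add: R_def)
  ultimately have cf: "c f = sgn (u f)"
    using f(2) by (auto simp: c_def p_def dart_head_def dart_tail_def sgn_if split: if_splits)
  have local: "\<bar>u e - c e\<bar> - \<bar>u e\<bar> + Z e * c e \<le> (if e = f then -1 else 0)" if e: "e \<in> arcs G" for e
  proof (cases "e = f")
    case True
    then show ?thesis using cf f by (auto simp: sgn_if)
  next
    case False
    then consider "Z e \<noteq> 0" "u e \<noteq> 0" | "Z e = 1" "u e = 0" | "Z e = -1" "u e = 0"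
      | "Z e = 0" "u e = 0" | "Z e = 0" "u e > 0" | "Z e = 0" "u e < 0"
      using Zv[of e] by fastforce
    then show ?thesis
    proof cases
      case 1
      then show ?thesis using \<open>e \<noteq> f\<close> Zc[OF e] c_vals[of e] by (auto simp: sgn_if)
    qed (use \<open>e \<noteq> f\<close> e c_vals[of e] c_pos[OF e] c_neg[OF e] in \<open>auto simp: augmenting_def\<close>)
  qed
  have "(\<Sum>e\<in>arcs G. Z e * c e) = 0"
    using unit_circulation_orthogonal_coboundary[of Z p] Z by (simp add: c_def conformal_def)
  then have "(\<Sum>e\<in>arcs G. \<bar>u e - c e\<bar>) - (\<Sum>e\<in>arcs G. \<bar>u e\<bar>)
      = (\<Sum>e\<in>arcs G. \<bar>u e - c e\<bar> - \<bar>u e\<bar> + Z e * c e)"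
    by (simp add: sum.distrib sum_subtractf)
  also have "\<dots> \<le> (\<Sum>e\<in>arcs G. if e = f then -1 else 0)"
    by (rule sum_mono) (rule local)
  also have "\<dots> = -1" using f(1) by simp
  finally show False using min[of p] by (simp add: c_def)
qed

lemma conformal_extend:
  assumes min: "\<And>p::'a \<Rightarrow> int. (\<Sum>e\<in>arcs G. \<bar>u e\<bar>) \<le> (\<Sum>e\<in>arcs G. \<bar>u e - (p (head G e) - p (tail G e))\<bar>)"
    and Z: "conformal u Z" and f: "f \<in> arcs G" "u f \<noteq> 0" "Z f = 0"
  obtains Z' where "conformal u Z'" "Z' f \<noteq> 0" "\<And>e. e \<in> arcs G \<Longrightarrow> u e \<noteq> 0 \<Longrightarrow> Z e \<noteq> 0 \<Longrightarrow> Z' e \<noteq> 0"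
  using conformal_augment[OF Z f L1_minimal_augmenting_path[OF min Z f]] by blast

lemma L1_minimal_conformal_circulation:
  assumes min: "\<And>p::'a \<Rightarrow> int. (\<Sum>e\<in>arcs G. \<bar>u e\<bar>) \<le> (\<Sum>e\<in>arcs G. \<bar>u e - (p (head G e) - p (tail G e))\<bar>)"
  obtains Z where "Z \<in> unit_circulations" "(\<Sum>e\<in>arcs G. Z e * u e) = (\<Sum>e\<in>arcs G. \<bar>u e\<bar>)"
proof -
  define F where "F = {e\<in>arcs G. u e \<noteq> 0}"
  define covered where "covered Z = card {e\<in>F. Z e \<noteq> 0}" for Z :: "'b \<Rightarrow> int"
  have "covered Z \<le> card F" for Z
    unfolding covered_def by (rule card_mono) (auto simp: F_def)
  then have bound: "covered Z < Suc (card F)" for Z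
    by (simp add: less_Suc_eq_le)
  have "conformal u (\<lambda>e. 0)" using zero_in_unit_circulations by (simp add: conformal_def)
  then obtain Z where Z: "conformal u Z" and Zmax: "\<And>Z'. conformal u Z' \<Longrightarrow> covered Z' \<le> covered Z"
    using ex_has_greatest_nat[of "conformal u" "\<lambda>e. 0" covered "Suc (card F)"] bound by blast
  have full: "Z e \<noteq> 0" if "e \<in> F" for e
  proof (rule ccontr)
    assume "\<not> Z e \<noteq> 0"
    moreover have "e \<in> arcs G" "u e \<noteq> 0" using that by (auto simp: F_def)
    ultimately obtain Z' where Z': "conformal u Z'" "Z' e \<noteq> 0"
        "\<And>e'. e' \<in> arcs G \<Longrightarrow> u e' \<noteq> 0 \<Longrightarrow> Z e' \<noteq> 0 \<Longrightarrow> Z' e' \<noteq> 0"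
      using conformal_extend[OF min Z, of e] by blast
    have "insert e {e\<in>F. Z e \<noteq> 0} \<subseteq> {e\<in>F. Z' e \<noteq> 0}" using Z' that by (auto simp: F_def)
    then have "card (insert e {e\<in>F. Z e \<noteq> 0}) \<le> covered Z'"
      unfolding covered_def by (rule card_mono[rotated]) (simp add: F_def)
    moreover have "card (insert e {e\<in>F. Z e \<noteq> 0}) = Suc (covered Z)"
      using \<open>\<not> Z e \<noteq> 0\<close> by (simp add: covered_def F_def)
    ultimately show False using Zmax[OF Z'(1)] by simp
  qed
  have "Z e * u e = \<bar>u e\<bar>" if "e \<in> arcs G" for e
    using Z full[of e] that by (cases "u e = 0") (auto simp: conformal_def F_def sgn_mult_self_eq abs_sgn)
  then show ?thesis using that Z by (auto simp: conformal_def)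
qed

section \<open>The quadratic form\<close>

text \<open>The weights make the unit circulations supported on any fixed even subgraph have total
  weight 1 / |E2|, so that q(v) is twice an average over the even subgraphs.\<close>

definition fiber_size :: "('b \<Rightarrow> int) \<Rightarrow> nat" where
  "fiber_size Z = card {Z'\<in>unit_circulations. support Z' = support Z}"

definition weight :: "('b \<Rightarrow> int) \<Rightarrow> rat" where
  "weight Z = 1 / (of_nat (card even_subgraphs) * of_nat (fiber_size Z))"

definition emm :: "'b \<Rightarrow> 'b \<Rightarrow> rat" where
  "emm e f = 2 * (\<Sum>Z\<in>unit_circulations. weight Z * of_int (Z e) * of_int (Z f))"

definition pairing :: "('b \<Rightarrow> int) \<Rightarrow> ('b \<Rightarrow> real) \<Rightarrow> real" where
  "pairing Z v = (\<Sum>e\<in>arcs G. of_int (Z e) * v e)"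

definition emm_form :: "('b \<Rightarrow> real) \<Rightarrow> real" where
  "emm_form v = 2 * (\<Sum>Z\<in>unit_circulations. real_of_rat (weight Z) * (pairing Z v)\<^sup>2)"

lemma card_even_subgraphs_pos: "card even_subgraphs > 0"
  using finite_even_subgraphs empty_in_even_subgraphs card_gt_0_iff by blast

lemma fiber_size_pos: "Z \<in> unit_circulations \<Longrightarrow> fiber_size Z > 0"
  unfolding fiber_size_def using finite_unit_circulations by (subst card_gt_0_iff) auto

lemma weight_real: "real_of_rat (weight Z) = 1 / (real (card even_subgraphs) * real (fiber_size Z))"
  by (simp add: weight_def of_rat_divide of_rat_mult)

lemma weight_pos: "Z \<in> unit_circulations \<Longrightarrow> weight Z > 0"
  using fiber_size_pos[of Z] card_even_subgraphs_pos by (simp add: weight_def)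

lemma qform_emm: "qform G emm v = emm_form v"
proof -
  define r where "r Z = real_of_rat (weight Z)" for Z
  have "qform G emm v = (\<Sum>e\<in>arcs G. \<Sum>f\<in>arcs G. \<Sum>Z\<in>unit_circulations.
      2 * r Z * ((of_int (Z e) * v e) * (of_int (Z f) * v f)))"
    unfolding qform_def emm_def r_def
    by (simp add: of_rat_sum of_rat_mult sum_distrib_left sum_distrib_right mult_ac)
  also have "\<dots> = (\<Sum>e\<in>arcs G. \<Sum>Z\<in>unit_circulations. \<Sum>f\<in>arcs G.
      2 * r Z * ((of_int (Z e) * v e) * (of_int (Z f) * v f)))"
    by (rule sum.cong[OF HOL.refl], rule sum.swap)
  also have "\<dots> = (\<Sum>Z\<in>unit_circulations. \<Sum>e\<in>arcs G. \<Sum>f\<in>arcs G.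
      2 * r Z * ((of_int (Z e) * v e) * (of_int (Z f) * v f)))"
    by (rule sum.swap)
  also have "\<dots> = (\<Sum>Z\<in>unit_circulations. 2 * r Z * (pairing Z v)\<^sup>2)"
    unfolding pairing_def power2_eq_square sum_product by (simp add: sum_distrib_left)
  finally show ?thesis unfolding emm_form_def r_def by (simp add: sum_distrib_left mult_ac)
qed

lemma sum_weight_by_support:
  "(\<Sum>Z\<in>unit_circulations. real_of_rat (weight Z) * h (support Z))
     = (\<Sum>S\<in>even_subgraphs. h S) / real (card even_subgraphs)"
proof -
  have "(\<Sum>Z\<in>unit_circulations. real_of_rat (weight Z) * h (support Z))
      = (\<Sum>S\<in>even_subgraphs. \<Sum>Z\<in>{Z\<in>unit_circulations. support Z = S}. real_of_rat (weight Z) * h (support Z))"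
    by (rule sum.group[symmetric])
      (use finite_unit_circulations finite_even_subgraphs support_in_even_subgraphs in auto)
  also have "\<dots> = (\<Sum>S\<in>even_subgraphs. h S / real (card even_subgraphs))"
  proof (rule sum.cong[OF HOL.refl])
    fix S assume S: "S \<in> even_subgraphs"
    define C where "C = {Z\<in>unit_circulations. support Z = S}"
    have "finite C" using finite_unit_circulations by (simp add: C_def)
    moreover have "C \<noteq> {}" using even_subgraph_is_support[OF S] by (auto simp: C_def)
    ultimately have "card C > 0" by auto
    have "(\<Sum>Z\<in>C. real_of_rat (weight Z) * h (support Z))
        = (\<Sum>Z\<in>C. h S / (real (card even_subgraphs) * real (card C)))"
      by (rule sum.cong[OF HOL.refl]) (auto simp: C_def weight_real fiber_size_def)
    also have "\<dots> = h S / real (card even_subgraphs)" using \<open>card C > 0\<close> by simp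
    finally show "(\<Sum>Z\<in>{Z\<in>unit_circulations. support Z = S}. real_of_rat (weight Z) * h (support Z))
        = h S / real (card even_subgraphs)"
      by (simp add: C_def)
  qed
  also have "\<dots> = (\<Sum>S\<in>even_subgraphs. h S) / real (card even_subgraphs)"
    by (simp add: sum_divide_distrib)
  finally show ?thesis .
qed

lemma double_weight_of_half_even_subgraphs:
  assumes "2 * card {S\<in>even_subgraphs. P S} = card even_subgraphs"
  shows "2 * (\<Sum>Z\<in>unit_circulations. real_of_rat (weight Z) * (if P (support Z) then 1 else 0)) = 1"
proof -
  have "(\<Sum>S\<in>even_subgraphs. if P S then 1 else 0) = real (card {S\<in>even_subgraphs. P S})"
    using finite_even_subgraphs by (simp add: sum.If_cases Int_def)
  moreover have "2 * real (card {S\<in>even_subgraphs. P S}) = real (card even_subgraphs)"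
    using arg_cong[where f = real, OF assms] by simp
  ultimately show ?thesis
    using sum_weight_by_support[of "\<lambda>S. if P S then 1 else 0"] card_even_subgraphs_pos by simp
qed

lemma emm_in_sym2_H1: "emm \<in> sym2_H1 G"
  unfolding sym2_H1_def
proof (intro CollectI conjI allI)
  fix e f
  show "emm e f = emm f e" by (simp add: emm_def mult_ac)
next
  fix f
  show "(\<lambda>e. emm e f) \<in> cycle_space_rat G"
    unfolding cycle_space_rat_def
  proof (intro CollectI conjI allI impI ballI)
    fix e assume "e \<notin> arcs G"
    then show "emm e f = 0"
      unfolding emm_def by (auto intro!: sum.neutral simp: unit_circulations_def)
  next
    fix x assume x: "x \<in> verts G"
    have "netflow (\<lambda>e. emm e f) x
        = netflow (\<lambda>e. \<Sum>Z\<in>unit_circulations. (2 * weight Z * of_int (Z f)) * of_int (Z e)) x"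
      unfolding emm_def by (simp add: sum_distrib_left mult_ac)
    also have "\<dots> = (\<Sum>Z\<in>unit_circulations. (2 * weight Z * of_int (Z f)) * of_int (netflow Z x))"
      by (simp add: netflow_sum[OF finite_unit_circulations] netflow_mult_left netflow_of_int)
    also have "\<dots> = 0"
      using x by (intro sum.neutral) (auto simp: unit_circulations_def)
    finally show "(\<Sum>e\<in>arcs G. (if head G e = x then emm e f else 0) - (if tail G e = x then emm e f else 0)) = 0"
      by (simp add: netflow_def)
  qed
qed

lemma emm_form_pos:
  assumes "v \<notin> cobdry_real G"
  shows "emm_form v > 0"
proof -
  have "\<exists>Z\<in>unit_circulations. pairing Z v \<noteq> 0"
  proof (rule ccontr)
    assume "\<not> ?thesis"
    then obtain p :: "'a \<Rightarrow> real" where "\<forall>e\<in>arcs G. v e - (p (head G e) - p (tail G e)) = 0"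
      using exists_potential_modulo[of "\<lambda>a. a = 0" v] by (auto simp: pairing_def)
    then have "v \<in> cobdry_real G" by (auto simp: cobdry_real_def)
    with assms show False by simp
  qed
  then obtain Z where Z: "Z \<in> unit_circulations" "pairing Z v \<noteq> 0" by blast
  have "0 < (\<Sum>Z\<in>unit_circulations. real_of_rat (weight Z) * (pairing Z v)\<^sup>2)"
    by (rule sum_pos2[OF finite_unit_circulations Z(1)]) (use Z in \<open>auto simp: weight_pos less_imp_le\<close>)
  then show ?thesis by (simp add: emm_form_def)
qed

lemma emm_form_coedge:
  assumes e: "e \<in> arcs G" and nb: "\<not> is_bridge G e"
  shows "emm_form (\<lambda>x. of_int (coedge e x)) = 1"
proof -
  have square: "(pairing Z (\<lambda>x. of_int (coedge e x)))\<^sup>2 = (if e \<in> support Z then 1 else 0)"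
    if Z: "Z \<in> unit_circulations" for Z
  proof -
    have "pairing Z (\<lambda>x. of_int (coedge e x)) = of_int (Z e)"
      unfolding pairing_def coedge_def using e by (simp add: if_distrib cong: if_cong)
    moreover have "Z e \<in> {-1, 0, 1}" using Z by (auto simp: unit_circulations_def)
    ultimately show ?thesis using e by (auto simp: support_def)
  qed
  obtain S0 where "S0 \<in> even_subgraphs" "e \<in> S0" using nonbridge_in_even_subgraph[OF e nb] .
  then have "2 * card {S\<in>even_subgraphs. e \<in> S} = card even_subgraphs"
    by (intro card_half_by_sym_diff[OF finite_even_subgraphs sym_diff_in_even_subgraphs]) auto
  then show ?thesis
    unfolding emm_form_def using double_weight_of_half_even_subgraphs[of "\<lambda>S. e \<in> S"] by (simp add: square)
qed

section \<open>Integral classes\<close>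

definition int_pairing :: "('b \<Rightarrow> int) \<Rightarrow> ('b \<Rightarrow> int) \<Rightarrow> int" where
  "int_pairing Z v = (\<Sum>e\<in>arcs G. Z e * v e)"

lemma emm_form_of_int:
  "emm_form (\<lambda>x. of_int (v x)) = 2 * (\<Sum>Z\<in>unit_circulations. real_of_rat (weight Z) * (of_int (int_pairing Z v))\<^sup>2)"
  by (simp add: emm_form_def pairing_def int_pairing_def)

lemma int_pairing_coboundary:
  assumes "v \<in> cobdry_int G" "Z \<in> unit_circulations"
  shows "int_pairing Z v = 0"
proof -
  obtain p where "\<forall>e\<in>arcs G. v e = p (head G e) - p (tail G e)"
    using assms(1) by (auto simp: cobdry_int_def)
  then show ?thesis
    using unit_circulation_orthogonal_coboundary[OF assms(2), of p] by (simp add: int_pairing_def)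
qed

lemma int_pairing_nonzero:
  assumes "v \<notin> cobdry_int G"
  obtains Z where "Z \<in> unit_circulations" "int_pairing Z v \<noteq> 0"
proof (rule ccontr)
  assume "\<not> thesis"
  with that have "\<And>Z. Z \<in> unit_circulations \<Longrightarrow> (\<Sum>e\<in>arcs G. of_int (Z e) * v e) = 0"
    by (auto simp: int_pairing_def)
  then obtain p :: "'a \<Rightarrow> int" where "\<forall>e\<in>arcs G. v e - (p (head G e) - p (tail G e)) = 0"
    using exists_potential_modulo[of "\<lambda>a. a = 0" v] by auto
  then have "v \<in> cobdry_int G" by (auto simp: cobdry_int_def)
  with assms show False by simp
qed

lemma int_pairing_parity:
  assumes Z: "Z \<in> unit_circulations"
  shows "even (int_pairing Z v) \<longleftrightarrow> even (\<Sum>e\<in>support Z. v e)"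
proof -
  have "int_pairing Z v = (\<Sum>e\<in>support Z. Z e * v e)"
    unfolding int_pairing_def by (rule sum.mono_neutral_right) (auto simp: support_def)
  then have "int_pairing Z v - (\<Sum>e\<in>support Z. v e) = (\<Sum>e\<in>support Z. Z e * v e - v e)"
    by (simp add: sum_subtractf)
  moreover have "even (\<Sum>e\<in>support Z. Z e * v e - v e)"
  proof (rule dvd_sum)
    fix e assume "e \<in> support Z"
    then have "Z e = 1 \<or> Z e = -1" using Z by (auto simp: support_def unit_circulations_def)
    then show "even (Z e * v e - v e)" by auto
  qed
  ultimately show ?thesis by (metis dvd_add_right_iff diff_add_cancel)
qed

text \<open>If v has odd sum on some even subgraph, it does so on exactly half of them, and on those
  every circulation pairs oddly (hence nontrivially) with v.\<close>

lemma emm_form_odd_cocycle: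
  fixes v :: "'b \<Rightarrow> int"
  assumes S0: "S0 \<in> even_subgraphs" "odd (\<Sum>e\<in>S0. v e)"
  shows emm_form_odd_ge_1: "emm_form (\<lambda>x. of_int (v x)) \<ge> 1"
    and emm_form_odd_eq_1: "emm_form (\<lambda>x. of_int (v x)) = 1 \<Longrightarrow> Z \<in> unit_circulations \<Longrightarrow> \<bar>int_pairing Z v\<bar> \<le> 1"
proof -
  define odd_on where "odd_on S = (if odd (\<Sum>e\<in>S. v e) then 1 else (0::real))" for S
  have "2 * card {S\<in>even_subgraphs. odd (\<Sum>e\<in>S. v e)} = card even_subgraphs"
  proof (rule card_half_by_sym_diff[OF finite_even_subgraphs sym_diff_in_even_subgraphs])
    fix S T assume "S \<in> even_subgraphs" "T \<in> even_subgraphs"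
    then have "(\<Sum>e\<in>sym_diff S T. v e) = (\<Sum>e\<in>S. v e) + (\<Sum>e\<in>T. v e) - 2 * (\<Sum>e\<in>S \<inter> T. v e)"
      by (intro sum_sym_diff even_subgraph_finite)
    then show "odd (\<Sum>e\<in>sym_diff S T. v e) \<longleftrightarrow> odd (\<Sum>e\<in>S. v e) \<noteq> odd (\<Sum>e\<in>T. v e)"
      by simp
  qed (use S0 in auto)
  then have one: "2 * (\<Sum>Z\<in>unit_circulations. real_of_rat (weight Z) * odd_on (support Z)) = 1"
    using double_weight_of_half_even_subgraphs by (simp add: odd_on_def)
  define excess where "excess Z = real_of_rat (weight Z) * ((of_int (int_pairing Z v))\<^sup>2 - odd_on (support Z))" for Z
  have excess_nonneg: "0 \<le> excess Z" if "Z \<in> unit_circulations" for Z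
  proof -
    have "odd_on (support Z) \<le> (of_int (int_pairing Z v))\<^sup>2"
      using int_pairing_parity[OF that, of v] one_le_power2_of_int[of "int_pairing Z v"]
      by (cases "int_pairing Z v = 0") (auto simp: odd_on_def)
    then show ?thesis using weight_pos[OF that] by (simp add: excess_def)
  qed
  have q: "emm_form (\<lambda>x. of_int (v x)) = 1 + 2 * (\<Sum>Z\<in>unit_circulations. excess Z)"
    unfolding emm_form_of_int excess_def using one by (simp add: algebra_simps sum_subtractf)
  then show "emm_form (\<lambda>x. of_int (v x)) \<ge> 1"
    using sum_nonneg[of unit_circulations excess] excess_nonneg by simp
  assume "emm_form (\<lambda>x. of_int (v x)) = 1" and Z: "Z \<in> unit_circulations"
  then have "(\<Sum>Z\<in>unit_circulations. excess Z) = 0" using q by simp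
  then have "excess Z = 0"
    using sum_nonneg_eq_0_iff[OF finite_unit_circulations] excess_nonneg Z by blast
  then have "(of_int (int_pairing Z v) :: real)\<^sup>2 \<le> 1"
    using weight_pos[OF Z] by (simp add: excess_def odd_on_def split: if_splits)
  then show "\<bar>int_pairing Z v\<bar> \<le> 1"
    by (metis abs_square_le_1 of_int_abs of_int_le_1_iff)
qed

lemma emm_form_bounded_below:
  obtains c where "c > 0" "\<And>v. v \<notin> cobdry_int G \<Longrightarrow> emm_form (\<lambda>x. of_int (v x)) \<ge> c"
proof -
  define m where "m = Min (real_of_rat ` weight ` unit_circulations)"
  have fin: "finite (real_of_rat ` weight ` unit_circulations)"
    using finite_unit_circulations by simp
  have "m > 0"
    unfolding m_def using fin zero_in_unit_circulations by (subst Min_gr_iff) (auto simp: weight_pos)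
  moreover have "emm_form (\<lambda>x. of_int (v x)) \<ge> m" if v: "v \<notin> cobdry_int G" for v
  proof -
    obtain Z where Z: "Z \<in> unit_circulations" "int_pairing Z v \<noteq> 0"
      using int_pairing_nonzero[OF v] .
    have "m \<le> real_of_rat (weight Z) * 1"
      unfolding m_def using Z(1) by (simp add: Min_le[OF fin])
    also have "\<dots> \<le> real_of_rat (weight Z) * (of_int (int_pairing Z v))\<^sup>2"
      using one_le_power2_of_int[OF Z(2)] weight_pos[OF Z(1)] by (intro mult_left_mono) auto
    also have "\<dots> \<le> (\<Sum>Z\<in>unit_circulations. real_of_rat (weight Z) * (of_int (int_pairing Z v))\<^sup>2)"
      by (rule member_le_sum[OF Z(1)]) (auto simp: weight_pos less_imp_le finite_unit_circulations)
    also have "\<dots> \<le> emm_form (\<lambda>x. of_int (v x))"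
      unfolding emm_form_of_int
      by (simp add: sum_nonneg weight_pos less_imp_le)
    finally show "emm_form (\<lambda>x. of_int (v x)) \<ge> m" .
  qed
  ultimately show thesis by (rule that)
qed

text \<open>Even sums on all even subgraphs make v a coboundary modulo 2: v = dp + 2w.\<close>

lemma emm_form_even_cocycle:
  fixes v :: "'b \<Rightarrow> int"
  assumes v: "v \<notin> cobdry_int G" and even: "\<forall>S\<in>even_subgraphs. even (\<Sum>e\<in>S. v e)"
  obtains w where "w \<notin> cobdry_int G" "emm_form (\<lambda>x. of_int (v x)) = 4 * emm_form (\<lambda>x. of_int (w x))"
proof -
  have "\<And>Z. Z \<in> unit_circulations \<Longrightarrow> even (\<Sum>e\<in>arcs G. of_int (Z e) * v e)"
    using int_pairing_parity even support_in_even_subgraphs by (simp add: int_pairing_def)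
  then obtain p :: "'a \<Rightarrow> int" where p: "\<forall>e\<in>arcs G. even (v e - (p (head G e) - p (tail G e)))"
    using exists_potential_modulo[of even v] by auto
  define w where "w e = (v e - (p (head G e) - p (tail G e))) div 2" for e
  have vw: "v e = (p (head G e) - p (tail G e)) + 2 * w e" if "e \<in> arcs G" for e
    using p that by (simp add: w_def)
  have "int_pairing Z v = 2 * int_pairing Z w" if Z: "Z \<in> unit_circulations" for Z
  proof -
    have "int_pairing Z v = (\<Sum>e\<in>arcs G. Z e * (p (head G e) - p (tail G e))) + (\<Sum>e\<in>arcs G. 2 * (Z e * w e))"
      unfolding int_pairing_def by (simp add: vw sum.distrib[symmetric] algebra_simps)
    also have "(\<Sum>e\<in>arcs G. Z e * (p (head G e) - p (tail G e))) = 0"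
      using unit_circulation_orthogonal_coboundary[OF Z, of p] by simp
    finally show ?thesis by (simp add: int_pairing_def sum_distrib_left)
  qed
  then have "emm_form (\<lambda>x. of_int (v x)) = 4 * emm_form (\<lambda>x. of_int (w x))"
    unfolding emm_form_of_int by (simp add: sum_distrib_left power_mult_distrib algebra_simps cong: sum.cong)
  moreover have "w \<notin> cobdry_int G"
  proof
    assume "w \<in> cobdry_int G"
    then obtain g where g: "\<forall>e\<in>arcs G. w e = g (head G e) - g (tail G e)" by (auto simp: cobdry_int_def)
    have "\<forall>e\<in>arcs G. v e = (p (head G e) + 2 * g (head G e)) - (p (tail G e) + 2 * g (tail G e))"
      using vw g by (simp add: algebra_simps)
    then have "v \<in> cobdry_int G"
      unfolding cobdry_int_def by (intro CollectI exI[of _ "\<lambda>x. p x + 2 * g x"]) simp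
    with v show False by simp
  qed
  ultimately show thesis using that by blast
qed

text \<open>Descent: on nontrivial classes the form is bounded below by some c > 0, and a class with
  even sums on all even subgraphs has four times the value of another nontrivial class.\<close>

lemma emm_form_int_ge_1:
  assumes "v \<notin> cobdry_int G"
  shows "emm_form (\<lambda>x. of_int (v x)) \<ge> 1"
proof -
  obtain c where c: "c > 0" "\<And>v. v \<notin> cobdry_int G \<Longrightarrow> emm_form (\<lambda>x. of_int (v x)) \<ge> c"
    using emm_form_bounded_below by blast
  have "emm_form (\<lambda>x. of_int (v x)) \<ge> 1"
    if "v \<notin> cobdry_int G" "emm_form (\<lambda>x. of_int (v x)) \<le> c * 4 ^ n" for n v
    using that
  proof (induction n arbitrary: v)
    case (0 v)
    show ?case
    proof (cases "\<exists>S\<in>even_subgraphs. odd (\<Sum>e\<in>S. v e)")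
      case True
      then obtain S where "S \<in> even_subgraphs" "odd (\<Sum>e\<in>S. v e)" by blast
      then show ?thesis by (rule emm_form_odd_ge_1)
    next
      case False
      then obtain w where w: "w \<notin> cobdry_int G" "emm_form (\<lambda>x. of_int (v x)) = 4 * emm_form (\<lambda>x. of_int (w x))"
        using emm_form_even_cocycle[OF "0.prems"(1)] by blast
      have "c \<le> emm_form (\<lambda>x. of_int (w x))" using c(2)[OF w(1)] .
      with c(1) w(2) "0.prems"(2) show ?thesis by simp
    qed
  next
    case (Suc n v)
    show ?case
    proof (cases "\<exists>S\<in>even_subgraphs. odd (\<Sum>e\<in>S. v e)")
      case True
      then obtain S where "S \<in> even_subgraphs" "odd (\<Sum>e\<in>S. v e)" by blast
      then show ?thesis by (rule emm_form_odd_ge_1)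
    next
      case False
      then obtain w where w: "w \<notin> cobdry_int G" "emm_form (\<lambda>x. of_int (v x)) = 4 * emm_form (\<lambda>x. of_int (w x))"
        using emm_form_even_cocycle[OF Suc.prems(1)] by blast
      have "emm_form (\<lambda>x. of_int (w x)) \<le> c * 4 ^ n" using w(2) Suc.prems(2) by simp
      then have "emm_form (\<lambda>x. of_int (w x)) \<ge> 1" by (rule Suc.IH[OF w(1)])
      with w(2) show ?thesis by simp
    qed
  qed
  moreover obtain n where "emm_form (\<lambda>x. of_int (v x)) / c < 4 ^ n" using real_arch_pow[of 4] by auto
  then have "emm_form (\<lambda>x. of_int (v x)) \<le> c * 4 ^ n" using c(1) by (simp add: field_simps)
  ultimately show ?thesis using assms by blast
qed

lemma emm_form_eq_1_pairing_bound:
  assumes q: "emm_form (\<lambda>x. of_int (v x)) = 1" and Z: "Z \<in> unit_circulations"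
  shows "\<bar>int_pairing Z v\<bar> \<le> 1"
proof (cases "\<exists>S\<in>even_subgraphs. odd (\<Sum>e\<in>S. v e)")
  case True
  then obtain S where "S \<in> even_subgraphs" "odd (\<Sum>e\<in>S. v e)" by blast
  then show ?thesis using emm_form_odd_eq_1 q Z by blast
next
  case False
  have "v \<notin> cobdry_int G"
    using q int_pairing_coboundary by (auto simp: emm_form_of_int)
  then obtain w where w: "w \<notin> cobdry_int G" "emm_form (\<lambda>x. of_int (v x)) = 4 * emm_form (\<lambda>x. of_int (w x))"
    using False emm_form_even_cocycle by blast
  then show ?thesis using emm_form_int_ge_1[OF w(1)] q by simp
qed

section \<open>The strong condition\<close>

lemma exists_L1_minimal_representative:
  fixes v :: "'b \<Rightarrow> int"
  obtains p0 :: "'a \<Rightarrow> int" where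
    "\<And>p. (\<Sum>e\<in>arcs G. \<bar>v e - (p0 (head G e) - p0 (tail G e))\<bar>)
          \<le> (\<Sum>e\<in>arcs G. \<bar>v e - (p0 (head G e) - p0 (tail G e)) - (p (head G e) - p (tail G e))\<bar>)"
proof -
  define L where "L p = nat (\<Sum>e\<in>arcs G. \<bar>v e - (p (head G e) - p (tail G e))\<bar>)" for p :: "'a \<Rightarrow> int"
  obtain p0 where p0: "\<And>p. L p0 \<le> L p"
    using ex_has_least_nat[of "\<lambda>p. True" "\<lambda>x. 0" L] by blast
  show thesis
  proof (rule that[of p0])
    fix p :: "'a \<Rightarrow> int"
    have "L p0 \<le> L (\<lambda>x. p0 x + p x)" by (rule p0)
    then show "(\<Sum>e\<in>arcs G. \<bar>v e - (p0 (head G e) - p0 (tail G e))\<bar>)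
          \<le> (\<Sum>e\<in>arcs G. \<bar>v e - (p0 (head G e) - p0 (tail G e)) - (p (head G e) - p (tail G e))\<bar>)"
      by (simp add: L_def sum_nonneg nat_le_eq_zle algebra_simps)
  qed
qed

lemma emm_form_eq_1_coedge:
  fixes v :: "'b \<Rightarrow> int"
  assumes q: "emm_form (\<lambda>x. of_int (v x)) = 1"
  shows "\<exists>e\<in>arcs G. (\<lambda>x. v x - coedge e x) \<in> cobdry_int G \<or> (\<lambda>x. - v x - coedge e x) \<in> cobdry_int G"
proof -
  have v: "v \<notin> cobdry_int G"
    using q int_pairing_coboundary by (auto simp: emm_form_of_int)
  obtain p0 :: "'a \<Rightarrow> int" where p0: "\<And>p. (\<Sum>e\<in>arcs G. \<bar>v e - (p0 (head G e) - p0 (tail G e))\<bar>)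
      \<le> (\<Sum>e\<in>arcs G. \<bar>v e - (p0 (head G e) - p0 (tail G e)) - (p (head G e) - p (tail G e))\<bar>)"
    using exists_L1_minimal_representative[of v] by blast
  define u where "u e = v e - (p0 (head G e) - p0 (tail G e))" for e
  obtain Z where Z: "Z \<in> unit_circulations" "(\<Sum>e\<in>arcs G. Z e * u e) = (\<Sum>e\<in>arcs G. \<bar>u e\<bar>)"
    using L1_minimal_conformal_circulation[of u] p0 unfolding u_def by blast
  have "(\<Sum>e\<in>arcs G. Z e * u e) = int_pairing Z v"
    using unit_circulation_orthogonal_coboundary[OF Z(1), of p0]
    by (simp add: u_def int_pairing_def right_diff_distrib sum_subtractf)
  then have small: "(\<Sum>e\<in>arcs G. \<bar>u e\<bar>) \<le> 1"
    using emm_form_eq_1_pairing_bound[OF q Z(1)] Z(2) by simp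
  obtain h where h: "h \<in> arcs G" "u h \<noteq> 0"
    using v by (force simp: u_def cobdry_int_def)
  have uh: "u h = 1 \<or> u h = -1" and rest: "\<And>e. e \<in> arcs G \<Longrightarrow> e \<noteq> h \<Longrightarrow> u e = 0"
    using sum_abs_le_1_single[OF finite_arcs small h] by auto
  show ?thesis
  proof (intro bexI[OF _ h(1)])
    from uh show "(\<lambda>x. v x - coedge h x) \<in> cobdry_int G \<or> (\<lambda>x. - v x - coedge h x) \<in> cobdry_int G"
    proof
      assume "u h = 1"
      then have "\<forall>e\<in>arcs G. v e - coedge h e = p0 (head G e) - p0 (tail G e)"
        using rest by (auto simp: coedge_def u_def)
      then show ?thesis by (auto simp: cobdry_int_def)
    next
      assume "u h = -1"
      then have "\<forall>e\<in>arcs G. - v e - coedge h e = - p0 (head G e) - - p0 (tail G e)"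
        using rest by (auto simp: coedge_def u_def)
      then show ?thesis unfolding cobdry_int_def by (intro disjI2 CollectI exI[of _ "\<lambda>x. - p0 x"]) simp
    qed
  qed
qed

end

theorem theorem5p6:
  fixes G :: "('v,'e) pre_digraph"
  assumes "fin_digraph G"
  shows "\<exists>Q. strong_Q_emm G Q"
proof -
  interpret fin_digraph G by fact
  have "strong_Q_emm G emm"
    unfolding strong_Q_emm_def Q_emm_def qform_emm
    using emm_in_sym2_H1 emm_form_pos emm_form_coedge emm_form_int_ge_1 emm_form_eq_1_coedge
    by blast
  then show ?thesis by blast
qed

end
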